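(* Let $G\in\mathcal{G}_3$ be simply connected and suppose every interior edge of $G$ has even degree. Then $G$ can be properly vertex colored with $4$ colors.
   Context: All graphs are finite simple graphs $G=(V,E)$. For a vertex $x$, $S(x)$ is the subgraph induced by the neighbors of $x$. A graph is contractible if it is $K_1$, or, inductively, if there is a vertex $x$ with both $S(x)$ and the subgraph induced by $V\setminus\{x\}$ contractible. $\mathcal{G}_0$: graphs without edges; $\mathcal{S}_0$: those with two vertices; $\mathcal{B}_0$: those with one vertex. For $d\ge1$: $\mathcal{G}_d$ is the class of graphs in which every $S(x)$ lies in $\mathcal{S}_{d-1}\cup\mathcal{B}_{d-1}$; the boundary is the subgraph induced by vertices with $S(x)\in\mathcal{B}_{d-1}$, and the interior must be nonempty; $\mathcal{B}_d$: contractible graphs in $\mathcal{G}_d$ with boundary in $\mathcal{S}_{d-1}$; $\mathcal{S}_d$: non-contractible graphs in $\mathcal{G}_d$ such that removing any single vertex yields a graph in $\mathcal{B}_d$. For $G\in\mathcal{G}_3$ and an edge $e=(a,b)$, the degree of $e$ is the number of vertices of $S(a)\cap S(b)$ (the number of tetrahedra containing $e$); $e$ is interior if $S(a)\cap S(b)$ is a cycle graph. A closed path is a sequence $x_0,x_1,\dots,x_n=x_0$ of vertices with consecutive ones adjacent; two closed paths are homotopic if one can be transformed into the other by finitely many steps of the following types and their inverses: replacing a backtrack $a,b,a$ by $a$ (or $a,a$ by $a$), and replacing $a,b,c$ by $a,c$ when $(a,b,c)$ is a triangle. $G$ is simply connected if it is connected and every closed path is homotopic to a constant path. *)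

theory Defs
  imports Main
begin

type_synonym 'a graph = "'a set \<times> ('a \<times> 'a) set"

definition verts :: "'a graph \<Rightarrow> 'a set" where "verts G = fst G"
definition edges :: "'a graph \<Rightarrow> ('a \<times> 'a) set" where "edges G = snd G"

definition simple_graph :: "'a graph \<Rightarrow> bool" where
  "simple_graph G \<longleftrightarrow> finite (verts G) \<and> edges G \<subseteq> verts G \<times> verts G
     \<and> sym (edges G) \<and> irrefl (edges G)"

definition induce :: "'a graph \<Rightarrow> 'a set \<Rightarrow> 'a graph" where
  "induce G W = (W \<inter> verts G, edges G \<inter> ((W \<inter> verts G) \<times> (W \<inter> verts G)))"

definition nbrs :: "'a graph \<Rightarrow> 'a \<Rightarrow> 'a set" where
  "nbrs G x = {y \<in> verts G. (x, y) \<in> edges G}"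

definition sphere :: "'a graph \<Rightarrow> 'a \<Rightarrow> 'a graph" where
  "sphere G x = induce G (nbrs G x)"

inductive contractible :: "'a graph \<Rightarrow> bool" where
  K1: "simple_graph G \<Longrightarrow> card (verts G) = 1 \<Longrightarrow> contractible G"
| step: "simple_graph G \<Longrightarrow> x \<in> verts G \<Longrightarrow> contractible (sphere G x)
          \<Longrightarrow> contractible (induce G (verts G - {x})) \<Longrightarrow> contractible G"

definition boundary_verts :: "('a graph \<Rightarrow> bool) \<Rightarrow> 'a graph \<Rightarrow> 'a set" where
  "boundary_verts Bp G = {x \<in> verts G. Bp (sphere G x)}"

definition interior_verts :: "('a graph \<Rightarrow> bool) \<Rightarrow> 'a graph \<Rightarrow> 'a set" where
  "interior_verts Bp G = verts G - boundary_verts Bp G"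

definition in_G_step :: "('a graph \<Rightarrow> bool) \<Rightarrow> ('a graph \<Rightarrow> bool) \<Rightarrow> 'a graph \<Rightarrow> bool" where
  "in_G_step Sp Bp G \<longleftrightarrow> simple_graph G
     \<and> (\<forall>x \<in> verts G. Sp (sphere G x) \<or> Bp (sphere G x))
     \<and> interior_verts Bp G \<noteq> {}"

fun SB :: "nat \<Rightarrow> ('a graph \<Rightarrow> bool) \<times> ('a graph \<Rightarrow> bool)" where
  "SB 0 = ((\<lambda>G. simple_graph G \<and> edges G = {} \<and> card (verts G) = 2),
           (\<lambda>G. simple_graph G \<and> edges G = {} \<and> card (verts G) = 1))"
| "SB (Suc d) =
    (let Sp = fst (SB d); Bp = snd (SB d);
         Bn = (\<lambda>G. contractible G \<and> in_G_step Sp Bp G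
                    \<and> Sp (induce G (boundary_verts Bp G)))
     in ((\<lambda>G. in_G_step Sp Bp G \<and> \<not> contractible G
                \<and> (\<forall>x \<in> verts G. Bn (induce G (verts G - {x})))), Bn))"

definition S_class :: "nat \<Rightarrow> 'a graph \<Rightarrow> bool" where "S_class d = fst (SB d)"
definition B_class :: "nat \<Rightarrow> 'a graph \<Rightarrow> bool" where "B_class d = snd (SB d)"

definition G_class :: "nat \<Rightarrow> 'a graph \<Rightarrow> bool" where
  "G_class d G = (if d = 0 then simple_graph G \<and> edges G = {}
                  else in_G_step (S_class (d - 1)) (B_class (d - 1)) G)"

text \<open>Intersection S(a) \<inter> S(b) of the two induced subgraphs (= induced on common neighbours).\<close>
definition edge_link :: "'a graph \<Rightarrow> 'a \<Rightarrow> 'a \<Rightarrow> 'a graph" where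
  "edge_link G a b = induce G (nbrs G a \<inter> nbrs G b)"

definition edge_degree :: "'a graph \<Rightarrow> 'a \<Rightarrow> 'a \<Rightarrow> nat" where
  "edge_degree G a b = card (verts (edge_link G a b))"

definition connected_graph :: "'a graph \<Rightarrow> bool" where
  "connected_graph G \<longleftrightarrow> verts G \<noteq> {} \<and>
     (\<forall>x \<in> verts G. \<forall>y \<in> verts G. (x, y) \<in> (edges G)\<^sup>*)"

definition cycle_graph :: "'a graph \<Rightarrow> bool" where
  "cycle_graph G \<longleftrightarrow> simple_graph G \<and> connected_graph G
     \<and> (\<forall>x \<in> verts G. card (nbrs G x) = 2)"

definition interior_edge :: "'a graph \<Rightarrow> 'a \<Rightarrow> 'a \<Rightarrow> bool" where
  "interior_edge G a b \<longleftrightarrow> (a, b) \<in> edges G \<and> cycle_graph (edge_link G a b)"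

definition closed_path :: "'a graph \<Rightarrow> 'a list \<Rightarrow> bool" where
  "closed_path G xs \<longleftrightarrow> xs \<noteq> [] \<and> set xs \<subseteq> verts G \<and> hd xs = last xs
     \<and> (\<forall>i. Suc i < length xs \<longrightarrow> (xs ! i, xs ! Suc i) \<in> edges G)"

inductive htp_step :: "'a graph \<Rightarrow> 'a list \<Rightarrow> 'a list \<Rightarrow> bool" for G where
  backtrack: "(a, b) \<in> edges G \<Longrightarrow> htp_step G (us @ [a, b, a] @ vs) (us @ [a] @ vs)"
| repeat: "a \<in> verts G \<Longrightarrow> htp_step G (us @ [a, a] @ vs) (us @ [a] @ vs)"
| triangle: "(a, b) \<in> edges G \<Longrightarrow> (b, c) \<in> edges G \<Longrightarrow> (a, c) \<in> edges G \<Longrightarrow>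
     htp_step G (us @ [a, b, c] @ vs) (us @ [a, c] @ vs)"

definition homotopic :: "'a graph \<Rightarrow> 'a list \<Rightarrow> 'a list \<Rightarrow> bool" where
  "homotopic G = (\<lambda>xs ys. htp_step G xs ys \<or> htp_step G ys xs)\<^sup>*\<^sup>*"

definition simply_connected :: "'a graph \<Rightarrow> bool" where
  "simply_connected G \<longleftrightarrow> connected_graph G \<and>
     (\<forall>xs. closed_path G xs \<longrightarrow> (\<exists>x. homotopic G xs [x]))"

definition colorable :: "nat \<Rightarrow> 'a graph \<Rightarrow> bool" where
  "colorable k G \<longleftrightarrow> (\<exists>c :: 'a \<Rightarrow> nat. (\<forall>v \<in> verts G. c v < k)
     \<and> (\<forall>(a, b) \<in> edges G. c a \<noteq> c b))"

end

theory Submission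
  imports Defs
begin

text \<open>The colouring is built by monodromy. A proper colouring of the star of \<open>b\<close> with four
  colours is a cone over a proper 3-colouring of the sphere \<open>S(b)\<close>. Every \<open>S(b)\<close> is a simply
  connected surface whose links \<open>S(b) \<inter> S(y)\<close> are connected and bipartite: contractible
  1-dimensional links are bipartite, and a cycle link belongs to an interior edge, so it has
  even length. On such a surface a 3-colouring exists and is determined by the colours of one
  edge (the same monodromy argument one dimension lower, a colouring of a star being fixed by
  the colours of an edge since the links are connected). Hence a star colouring at \<open>a\<close>
  continues uniquely to the star of a neighbour \<open>b\<close> (they share the triangle \<open>a b w\<close>), and
  consistently around triangles; as \<open>G\<close> is simply connected, continuing one star colouring
  along walks is path independent and yields a proper 4-colouring of \<open>G\<close>.\<close>

lemma simple_graph_finite: "simple_graph G \<Longrightarrow> finite (verts G)"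
  by (simp add: simple_graph_def)

lemma simple_graph_edge_verts: "simple_graph G \<Longrightarrow> (a, b) \<in> edges G \<Longrightarrow> a \<in> verts G \<and> b \<in> verts G"
  by (auto simp: simple_graph_def)

lemma simple_graph_edge_sym: "simple_graph G \<Longrightarrow> (a, b) \<in> edges G \<Longrightarrow> (b, a) \<in> edges G"
  by (auto simp: simple_graph_def sym_def)

lemma simple_graph_no_loop: "simple_graph G \<Longrightarrow> (a, a) \<notin> edges G"
  by (auto simp: simple_graph_def irrefl_def)

lemma verts_induce [simp]: "verts (induce G W) = W \<inter> verts G"
  by (simp add: induce_def verts_def)

lemma edges_induce [simp]: "edges (induce G W) = edges G \<inter> ((W \<inter> verts G) \<times> (W \<inter> verts G))"
  by (simp add: induce_def edges_def)

lemma induce_induce: "induce (induce G W) U = induce G (U \<inter> W)"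
  by (auto simp: induce_def verts_def edges_def)

lemma simple_graph_induce: "simple_graph G \<Longrightarrow> simple_graph (induce G W)"
  by (auto simp: simple_graph_def sym_def irrefl_def)

lemma nbrs_subset_verts: "nbrs G x \<subseteq> verts G"
  by (auto simp: nbrs_def)

lemma nbrs_iff_edge: "simple_graph G \<Longrightarrow> y \<in> nbrs G x \<longleftrightarrow> (x, y) \<in> edges G"
  by (auto simp: nbrs_def dest: simple_graph_edge_verts)

lemma nbrs_iff_edge_sym: "simple_graph G \<Longrightarrow> y \<in> nbrs G x \<longleftrightarrow> (y, x) \<in> edges G"
  by (meson nbrs_iff_edge simple_graph_edge_sym)

lemma nbrs_sym: "simple_graph G \<Longrightarrow> y \<in> nbrs G x \<longleftrightarrow> x \<in> nbrs G y"
  by (meson nbrs_iff_edge simple_graph_edge_sym)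

lemma not_in_nbrs_self: "simple_graph G \<Longrightarrow> x \<notin> nbrs G x"
  by (simp add: nbrs_iff_edge simple_graph_no_loop)

lemma nbrs_induce: "y \<in> W \<Longrightarrow> y \<in> verts G \<Longrightarrow> nbrs (induce G W) y = nbrs G y \<inter> W"
  by (auto simp: nbrs_def)

lemma verts_sphere [simp]: "verts (sphere G x) = nbrs G x"
  using nbrs_subset_verts[of G x] by (auto simp: sphere_def)

lemma edges_sphere: "edges (sphere G x) = edges G \<inter> (nbrs G x \<times> nbrs G x)"
  using nbrs_subset_verts[of G x] by (auto simp: sphere_def)

lemma simple_graph_sphere: "simple_graph G \<Longrightarrow> simple_graph (sphere G x)"
  by (simp add: sphere_def simple_graph_induce)

lemma nbrs_sphere: "y \<in> nbrs G x \<Longrightarrow> nbrs (sphere G x) y = nbrs G x \<inter> nbrs G y"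
  using nbrs_subset_verts by (auto simp: nbrs_def sphere_def)

lemma sphere_sphere_eq_edge_link: "y \<in> nbrs G x \<Longrightarrow> sphere (sphere G x) y = edge_link G x y"
  by (simp add: sphere_def edge_link_def induce_induce nbrs_sphere[unfolded sphere_def] Int_commute)

lemma edges_sphere_induce_subset: "edges (sphere (induce G W) y) \<subseteq> edges (sphere G y)"
  by (auto simp: edges_sphere nbrs_def)

lemma connected_graphI_hub:
  assumes "n \<in> verts G" and "\<And>v. v \<in> verts G \<Longrightarrow> (v, n) \<in> (edges G)\<^sup>* \<and> (n, v) \<in> (edges G)\<^sup>*"
  shows "connected_graph G"
  unfolding connected_graph_def using assms by (blast intro: rtrancl_trans)

lemma connected_graph_insert_vertex:
  assumes sg: "simple_graph G" and x: "x \<in> verts G"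
    and conn: "connected_graph (induce G (verts G - {x}))" and n: "n \<in> nbrs G x"
  shows "connected_graph G"
proof (rule connected_graphI_hub[of n])
  show nV: "n \<in> verts G" using n nbrs_subset_verts[of G x] by blast
  fix v assume v: "v \<in> verts G"
  show "(v, n) \<in> (edges G)\<^sup>* \<and> (n, v) \<in> (edges G)\<^sup>*"
  proof (cases "v = x")
    case True
    then show ?thesis using n nbrs_iff_edge[OF sg] simple_graph_edge_sym[OF sg] by blast
  next
    case False
    have "n \<noteq> x" using n not_in_nbrs_self[OF sg] by blast
    then have "(v, n) \<in> (edges (induce G (verts G - {x})))\<^sup>* \<and> (n, v) \<in> (edges (induce G (verts G - {x})))\<^sup>*"
      using conn v nV False by (auto simp: connected_graph_def)
    moreover have "(edges (induce G (verts G - {x})))\<^sup>* \<subseteq> (edges G)\<^sup>*"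
      by (intro rtrancl_mono) auto
    ultimately show ?thesis by blast
  qed
qed

abbreviation walk :: "('a \<times> 'a) set \<Rightarrow> 'a list \<Rightarrow> bool" where
  "walk R \<equiv> successively (\<lambda>x y. (x, y) \<in> R)"

lemma walk_append_Cons: "walk R (us @ x # vs) \<longleftrightarrow> walk R (us @ [x]) \<and> walk R (x # vs)"
  by (cases us rule: rev_cases) (auto simp: successively_append_iff)

lemma walk_snoc: "walk R (us @ [x, y]) \<longleftrightarrow> walk R (us @ [x]) \<and> (x, y) \<in> R"
  using walk_append_Cons[of R us x "[y]"] by simp

lemma walk_rev: "sym R \<Longrightarrow> walk R xs \<Longrightarrow> walk R (rev xs)"
  by (auto elim: successively_mono simp: sym_def)

lemma walk_restrict: "walk R xs \<Longrightarrow> set xs \<subseteq> S \<Longrightarrow> walk (R \<inter> S \<times> S) xs"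
  by (induction "\<lambda>x y. (x, y) \<in> R" xs rule: successively.induct) auto

lemma walk_set: "walk R xs \<Longrightarrow> xs \<noteq> [] \<Longrightarrow> hd xs \<in> V \<Longrightarrow> R \<subseteq> V \<times> V \<Longrightarrow> set xs \<subseteq> V"
  by (induction "\<lambda>x y. (x, y) \<in> R" xs rule: successively.induct) auto

lemma rtrancl_imp_walk:
  assumes "(x, y) \<in> R\<^sup>*"
  shows "\<exists>p. p \<noteq> [] \<and> hd p = x \<and> last p = y \<and> walk R p \<and> set p \<subseteq> insert x (snd ` R)"
  using assms
proof (induction rule: rtrancl_induct)
  case base
  show ?case by (intro exI[of _ "[x]"]) auto
next
  case (step y z)
  then obtain p where p: "p \<noteq> []" "hd p = x" "last p = y" "walk R p" "set p \<subseteq> insert x (snd ` R)"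
    by blast
  then obtain q where q: "p = q @ [y]" by (metis append_butlast_last_id)
  have "walk R (p @ [z])" using p q step walk_snoc[of R q y z] by simp
  moreover have "z \<in> snd ` R" using step by force
  ultimately show ?case using p by (intro exI[of _ "p @ [z]"]) auto
qed

lemma closed_path_iff_walk:
  "closed_path G xs \<longleftrightarrow> xs \<noteq> [] \<and> set xs \<subseteq> verts G \<and> hd xs = last xs \<and> walk (edges G) xs"
  by (simp add: closed_path_def successively_conv_nth)

lemma hd_append_Cons: "hd (us @ a # zs) = hd (us @ [a])"
  by (cases us) auto

lemma homotopic_refl: "homotopic G xs xs"
  by (simp add: homotopic_def)

lemma homotopic_trans: "homotopic G xs ys \<Longrightarrow> homotopic G ys zs \<Longrightarrow> homotopic G xs zs"
  unfolding homotopic_def by (rule rtranclp_trans)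

lemma htp_step_homotopic: "htp_step G xs ys \<Longrightarrow> homotopic G xs ys"
  and htp_step_homotopic_rev: "htp_step G ys xs \<Longrightarrow> homotopic G xs ys"
  unfolding homotopic_def by auto

lemma htp_step_append: "htp_step G xs ys \<Longrightarrow> htp_step G (p @ xs @ s) (p @ ys @ s)"
proof (induction rule: htp_step.induct)
  case (backtrack a b us vs)
  then show ?case using htp_step.backtrack[of a b G "p @ us" "vs @ s"] by simp
next
  case (repeat a us vs)
  then show ?case using htp_step.repeat[of a G "p @ us" "vs @ s"] by simp
next
  case (triangle a b c us vs)
  then show ?case using htp_step.triangle[of a b G c "p @ us" "vs @ s"] by simp
qed

lemma homotopic_append: "homotopic G xs ys \<Longrightarrow> homotopic G (p @ xs @ s) (p @ ys @ s)"
  unfolding homotopic_def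
proof (induction rule: rtranclp_induct)
  case (step y z)
  then show ?case using htp_step_append by (metis (no_types, lifting) rtranclp.simps)
qed simp

lemma htp_step_subgraph:
  "htp_step G' xs ys \<Longrightarrow> edges G' \<subseteq> edges G \<Longrightarrow> verts G' \<subseteq> verts G \<Longrightarrow> htp_step G xs ys"
proof (induction rule: htp_step.induct)
  case (backtrack a b us vs)
  then show ?case using htp_step.backtrack[of a b G us vs] by auto
next
  case (repeat a us vs)
  then show ?case using htp_step.repeat[of a G us vs] by auto
next
  case (triangle a b c us vs)
  then show ?case using htp_step.triangle[of a b G c us vs] by auto
qed

lemma homotopic_subgraph:
  "homotopic G' xs ys \<Longrightarrow> edges G' \<subseteq> edges G \<Longrightarrow> verts G' \<subseteq> verts G \<Longrightarrow> homotopic G xs ys"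
  unfolding homotopic_def
proof (induction rule: rtranclp_induct)
  case (step y z)
  then show ?case using htp_step_subgraph by (metis (no_types, lifting) rtranclp.simps)
qed simp

lemma htp_step_ends: "htp_step G xs ys \<Longrightarrow> xs \<noteq> [] \<and> ys \<noteq> [] \<and> hd xs = hd ys \<and> last xs = last ys"
  by (induction rule: htp_step.induct) (auto simp: hd_append last_append)

lemma homotopic_ends:
  "homotopic G xs ys \<Longrightarrow> xs \<noteq> [] \<Longrightarrow> ys \<noteq> [] \<and> hd ys = hd xs \<and> last ys = last xs"
  unfolding homotopic_def
proof (induction rule: rtranclp_induct)
  case (step y z)
  then show ?case using htp_step_ends[of G y z] htp_step_ends[of G z y] by auto
qed simp


section \<open>Simple connectivity\<close>

lemma homotopic_fan:
  assumes sg: "simple_graph G"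
  shows "walk (edges G) (u # rs) \<Longrightarrow> set (u # rs) \<subseteq> nbrs G x \<Longrightarrow> homotopic G [u, x] (u # rs @ [x])"
proof (induction rs arbitrary: u)
  case Nil
  then show ?case by (simp add: homotopic_refl)
next
  case (Cons t rs)
  have ut: "(u, t) \<in> edges G" using Cons by simp
  have "t \<in> nbrs G x" "u \<in> nbrs G x" using Cons.prems(2) by auto
  then have tx: "(t, x) \<in> edges G" and ux: "(u, x) \<in> edges G"
    using nbrs_iff_edge[OF sg] simple_graph_edge_sym[OF sg] by blast+
  have "homotopic G [u, x] [u, t, x]"
    using htp_step.triangle[OF ut tx ux, of "[]" "[]"] htp_step_homotopic_rev by simp
  moreover have "homotopic G ([u] @ [t, x] @ []) ([u] @ (t # rs @ [x]) @ [])"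
    using Cons by (intro homotopic_append) simp
  ultimately show ?case using homotopic_trans by fastforce
qed

lemma homotopic_detour:
  assumes sg: "simple_graph G" and walk: "walk (edges G) (u # rs)" and link: "set (u # rs) \<subseteq> nbrs G x"
    and w: "last (u # rs) = w"
  shows "homotopic G [u, x, w] (u # rs)"
proof -
  obtain zs where zs: "u # rs = zs @ [w]" using w append_butlast_last_id[of "u # rs"] by (metis list.distinct(1))
  have "w \<in> nbrs G x" using link w last_in_set[of "u # rs"] by auto
  then have "(w, x) \<in> edges G" using nbrs_iff_edge[OF sg] simple_graph_edge_sym[OF sg] by blast
  then have "homotopic G (zs @ [w, x, w] @ []) (zs @ [w] @ [])"
    by (intro htp_step_homotopic htp_step.backtrack)
  then have return: "homotopic G (u # rs @ [x, w]) (u # rs)"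
    unfolding append_Cons[symmetric] zs by simp
  have "homotopic G ([] @ [u, x] @ [w]) ([] @ (u # rs @ [x]) @ [w])"
    by (rule homotopic_append) (rule homotopic_fan[OF sg walk link])
  then show ?thesis using homotopic_trans[OF _ return] by simp
qed

lemma walk_in_sphere:
  assumes conn: "connected_graph (sphere G x)" and u: "u \<in> nbrs G x" and w: "w \<in> nbrs G x"
  shows "\<exists>rs. walk (edges G) (u # rs) \<and> set (u # rs) \<subseteq> nbrs G x \<and> last (u # rs) = w"
proof -
  have "(u, w) \<in> (edges (sphere G x))\<^sup>*" using conn u w by (auto simp: connected_graph_def)
  then obtain p where p: "p \<noteq> []" "hd p = u" "last p = w" "walk (edges (sphere G x)) p"
    "set p \<subseteq> insert u (snd ` edges (sphere G x))"
    using rtrancl_imp_walk by metis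
  have "set p \<subseteq> nbrs G x" using p(5) u by (auto simp: edges_sphere)
  moreover have "walk (edges G) p" using p(4) by (rule successively_mono) (auto simp: edges_sphere)
  moreover obtain rs where "p = u # rs" using p by (cases p) auto
  ultimately show ?thesis using p by auto
qed

text \<open>A walk whose ends differ from \<open>x\<close> can be pushed off \<open>x\<close>: each passage \<open>u, x, w\<close> is
  replaced by a walk from \<open>u\<close> to \<open>w\<close> inside the connected sphere of \<open>x\<close>.\<close>

lemma homotopic_avoid_vertex:
  assumes sg: "simple_graph G" and conn: "connected_graph (sphere G x)"
  shows "walk (edges G) xs \<Longrightarrow> set xs \<subseteq> verts G \<Longrightarrow> xs \<noteq> [] \<Longrightarrow> hd xs \<noteq> x \<Longrightarrow> last xs \<noteq> x \<Longrightarrow>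
    \<exists>ys. homotopic G xs ys \<and> walk (edges G) ys \<and> set ys \<subseteq> verts G - {x} \<and> ys \<noteq> []
      \<and> hd ys = hd xs \<and> last ys = last xs"
proof (induction "count_list xs x" arbitrary: xs rule: less_induct)
  case less
  show ?case
  proof (cases "x \<in> set xs")
    case False
    then show ?thesis using less.prems by (intro exI[of _ xs]) (auto simp: homotopic_refl)
  next
    case True
    then obtain p q where pq: "xs = p @ x # q" "x \<notin> set p" using split_list_first by metis
    have "p \<noteq> []" using pq less.prems by auto
    then obtain p' u where p: "p = p' @ [u]" by (metis append_butlast_last_id)
    obtain w q' where q: "q = w # q'" using pq less.prems by (cases q) auto
    have xs: "xs = p' @ [u, x, w] @ q'" using pq p q by simp
    have walk1: "walk (edges G) (p' @ [u])" and ux: "(u, x) \<in> edges G" and xw: "(x, w) \<in> edges G"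
      and walk2: "walk (edges G) (w # q')"
      using less.prems(1) unfolding xs using walk_append_Cons[of "edges G" p' u "x # w # q'"] by auto
    have un: "u \<in> nbrs G x" and wn: "w \<in> nbrs G x" 
      using ux xw nbrs_iff_edge[OF sg] simple_graph_edge_sym[OF sg] by blast+
    obtain rs where rs: "walk (edges G) (u # rs)" "set (u # rs) \<subseteq> nbrs G x" "last (u # rs) = w"
      using walk_in_sphere[OF conn un wn] by blast
    obtain zs where zs: "u # rs = zs @ [w]" using rs(3) append_butlast_last_id[of "u # rs"] by (metis list.distinct(1))
    define xs1 where "xs1 = p' @ (u # rs) @ q'"
    have "homotopic G xs xs1"
      unfolding xs xs1_def by (rule homotopic_append) (rule homotopic_detour[OF sg rs])
    have xs1: "xs1 = (p' @ zs) @ w # q'" unfolding xs1_def using zs by simp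
    have "walk (edges G) ((p' @ zs) @ [w])"
      using walk1 rs(1) walk_append_Cons[of "edges G" p' u rs] zs by simp
    then have walk_xs1: "walk (edges G) xs1"
      unfolding xs1 using walk2 walk_append_Cons[of "edges G" "p' @ zs" w q'] by simp
    have "x \<notin> set (u # rs)" using rs(2) not_in_nbrs_self[OF sg] by blast
    then have fewer: "count_list xs1 x < count_list xs x" unfolding xs1_def xs using pq(2) p by simp
    have "set xs1 \<subseteq> verts G" using less.prems(2) rs(2) nbrs_subset_verts[of G x] unfolding xs1_def xs by auto
    moreover have "hd xs1 = hd xs" unfolding xs1_def xs by (cases p') auto
    moreover have "last xs1 = last xs" unfolding xs1 xs by (cases q') auto
    moreover have "xs1 \<noteq> []" by (simp add: xs1_def)
    ultimately obtain ys where "homotopic G xs1 ys" "walk (edges G) ys" "set ys \<subseteq> verts G - {x}"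
      "ys \<noteq> []" "hd ys = hd xs" "last ys = last xs"
      using less.hyps[OF fewer walk_xs1] less.prems by auto
    then show ?thesis using homotopic_trans[OF \<open>homotopic G xs xs1\<close>] by blast
  qed
qed

lemma null_homotopic_off_vertex:
  assumes sg: "simple_graph G" and link: "connected_graph (sphere G x)"
    and sc: "simply_connected (induce G (verts G - {x}))"
    and ys: "closed_path G ys" "hd ys \<noteq> x"
  shows "\<exists>z. homotopic G ys [z]"
proof -
  let ?G' = "induce G (verts G - {x})"
  have ys': "ys \<noteq> []" "set ys \<subseteq> verts G" "hd ys = last ys" "walk (edges G) ys"
    using ys(1) by (auto simp: closed_path_iff_walk)
  obtain zs where zs: "homotopic G ys zs" "walk (edges G) zs" "set zs \<subseteq> verts G - {x}" "zs \<noteq> []"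
    "hd zs = hd ys" "last zs = last ys"
    using homotopic_avoid_vertex[OF sg link ys'(4,2,1)] ys(2) ys'(3) by auto
  have "walk (edges ?G') zs" using walk_restrict[OF zs(2,3)] by (simp add: Int_absorb2)
  moreover have "set zs \<subseteq> verts ?G'" using zs(3) by auto
  ultimately have "closed_path ?G' zs" using zs(4-6) ys'(3) by (simp only: closed_path_iff_walk) simp
  then obtain z where "homotopic ?G' zs [z]" using sc by (auto simp: simply_connected_def)
  then have "homotopic G zs [z]" by (rule homotopic_subgraph) auto
  then show ?thesis using homotopic_trans[OF zs(1)] by blast
qed

text \<open>A loop \<open>x, u, \<dots>, w, x\<close> is turned, by a fan around \<open>x\<close> from \<open>w\<close> back to \<open>u\<close>, into \<open>x\<close>
  followed by a loop at \<open>u\<close> followed by \<open>x\<close>.\<close>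

lemma null_homotopic_at_vertex:
  assumes sg: "simple_graph G" and link: "connected_graph (sphere G x)"
    and sc: "simply_connected (induce G (verts G - {x}))"
    and cp: "closed_path G xs" and hd_xs: "hd xs = x"
  shows "\<exists>z. homotopic G xs [z]"
proof (cases "xs = [x]")
  case True
  then show ?thesis using homotopic_refl by blast
next
  case False
  have xs: "xs \<noteq> []" "set xs \<subseteq> verts G" "hd xs = last xs" "walk (edges G) xs"
    using cp by (auto simp: closed_path_iff_walk)
  obtain r where r: "xs = x # r" using xs(1) hd_xs by (cases xs) auto
  then have "r \<noteq> []" "last r = x" using False hd_xs xs(3) by auto
  then obtain m where m: "xs = x # m @ [x]" using r by (metis append_butlast_last_id)
  have "m \<noteq> []" using xs(4) m sg by (auto simp: simple_graph_no_loop)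
  then obtain u m0 where um: "m = u # m0" by (cases m) auto
  obtain m1 w where mw: "m = m1 @ [w]" using \<open>m \<noteq> []\<close> by (metis append_butlast_last_id)
  have xu: "(x, u) \<in> edges G" using xs(4) m um by simp
  have wx: "(w, x) \<in> edges G" and "walk (edges G) (x # m1 @ [w])"
    using xs(4) walk_append_Cons[of "edges G" "x # m1" w "[x]"] m mw by auto
  then have walk_m: "walk (edges G) (m1 @ [w])" by (simp add: successively_Cons)
  have un: "u \<in> nbrs G x" and wn: "w \<in> nbrs G x"
    using xu wx nbrs_iff_edge[OF sg] simple_graph_edge_sym[OF sg] by blast+
  obtain rs where rs: "walk (edges G) (w # rs)" "set (w # rs) \<subseteq> nbrs G x" "last (w # rs) = u"
    using walk_in_sphere[OF link wn un] by blast
  define c where "c = m1 @ w # rs"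
  have "homotopic G ((x # m1) @ [w, x] @ []) ((x # m1) @ (w # rs @ [x]) @ [])"
    by (rule homotopic_append) (rule homotopic_fan[OF sg rs(1,2)])
  then have to_c: "homotopic G xs ([x] @ c @ [x])" using m mw by (simp add: c_def)
  have hd_c: "hd c = u" using um mw by (cases m1) (auto simp: c_def)
  have "walk (edges G) c"
    using walk_m rs(1) walk_append_Cons[of "edges G" m1 w rs] by (simp add: c_def)
  moreover have "set c \<subseteq> verts G"
    using xs(2) rs(2) nbrs_subset_verts[of G x] by (auto simp: m mw c_def)
  moreover have "last c = u" using rs(3) by (simp add: c_def)
  ultimately have "closed_path G c" using hd_c by (simp add: closed_path_iff_walk c_def)
  moreover have "u \<noteq> x" using un not_in_nbrs_self[OF sg] by blast
  ultimately obtain z where z: "homotopic G c [z]"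
    using null_homotopic_off_vertex[OF sg link sc] hd_c by blast
  then have "z = u" using homotopic_ends[OF z] hd_c by (auto simp: c_def)
  then have "homotopic G ([x] @ c @ [x]) ([] @ [x, u, x] @ [])"
    using homotopic_append[OF z, of "[x]" "[x]"] by simp
  moreover have "homotopic G ([] @ [x, u, x] @ []) ([] @ [x] @ [])"
    by (rule htp_step_homotopic) (rule htp_step.backtrack[OF xu])
  ultimately have "homotopic G xs [x]" using to_c homotopic_trans by (metis append.left_neutral append_Nil2)
  then show ?thesis by blast
qed

lemma simply_connected_insert_vertex:
  assumes sg: "simple_graph G" and x: "x \<in> verts G" and link: "connected_graph (sphere G x)"
    and sc: "simply_connected (induce G (verts G - {x}))"
  shows "simply_connected G"
proof -
  obtain n where n: "n \<in> nbrs G x" using link by (auto simp: connected_graph_def)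
  then have "connected_graph G"
    using connected_graph_insert_vertex[OF sg x] sc by (simp add: simply_connected_def)
  moreover have "\<exists>z. homotopic G xs [z]" if "closed_path G xs" for xs
    using null_homotopic_off_vertex[OF sg link sc that] null_homotopic_at_vertex[OF sg link sc that] by blast
  ultimately show ?thesis by (simp add: simply_connected_def)
qed

lemma contractible_simple_graph: "contractible G \<Longrightarrow> simple_graph G \<and> verts G \<noteq> {}"
  by (induction rule: contractible.induct) auto

lemma contractible_imp_simply_connected: "contractible G \<Longrightarrow> simply_connected G"
proof (induction rule: contractible.induct)
  case (K1 G)
  then obtain v where v: "verts G = {v}" by (auto simp: card_Suc_eq)
  have "xs = [v]" if "closed_path G xs" for xs
  proof -
    have xs: "xs \<noteq> []" "set xs \<subseteq> {v}" "walk (edges G) xs" using that v by (auto simp: closed_path_iff_walk)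
    then obtain t where t: "xs = v # t" by (cases xs) auto
    have "(v, v) \<notin> edges G" using K1 simple_graph_no_loop by metis
    then show ?thesis using xs t by (cases t) auto
  qed
  then show ?case using v homotopic_refl by (fastforce simp: simply_connected_def connected_graph_def)
next
  case (step G x)
  then show ?case
    using simply_connected_insert_vertex[OF step(1,2)] by (simp add: simply_connected_def)
qed


section \<open>The classes of dimension at most two\<close>

lemma S_class_0: "S_class 0 G \<longleftrightarrow> simple_graph G \<and> edges G = {} \<and> card (verts G) = 2"
  by (simp add: S_class_def)

lemma B_class_0: "B_class 0 G \<longleftrightarrow> simple_graph G \<and> edges G = {} \<and> card (verts G) = 1"
  by (simp add: B_class_def)

lemma S_class_Suc: "S_class (Suc d) G \<longleftrightarrow> in_G_step (S_class d) (B_class d) G \<and> \<not> contractible G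
   \<and> (\<forall>x\<in>verts G. B_class (Suc d) (induce G (verts G - {x})))"
  by (simp add: S_class_def B_class_def Let_def)

lemma B_class_Suc: "B_class (Suc d) G \<longleftrightarrow> contractible G \<and> in_G_step (S_class d) (B_class d) G
   \<and> S_class d (induce G (boundary_verts (B_class d) G))"
  by (simp add: S_class_def B_class_def Let_def)

lemma in_G_step_Suc: "S_class (Suc d) G \<or> B_class (Suc d) G \<Longrightarrow> in_G_step (S_class d) (B_class d) G"
  by (auto simp: S_class_Suc B_class_Suc)

lemma in_G_step_verts_nonempty: "in_G_step S B G \<Longrightarrow> verts G \<noteq> {}"
  by (auto simp: in_G_step_def interior_verts_def)

lemma in_G_step_0_link_nonempty_edgeless:
  "in_G_step (S_class 0) (B_class 0) L \<Longrightarrow> x \<in> verts L \<Longrightarrow> nbrs L x \<noteq> {} \<and> edges (sphere L x) = {}"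
  by (fastforce simp: in_G_step_def S_class_0 B_class_0)

lemma contractible_edgeless: "contractible G \<Longrightarrow> edges G = {} \<Longrightarrow> card (verts G) = 1"
proof (induction rule: contractible.cases)
  case (step G x)
  then obtain y where "y \<in> nbrs G x" using contractible_simple_graph by fastforce
  then show ?case using step by (simp add: nbrs_def)
qed simp

definition bipartite :: "'a graph \<Rightarrow> bool" where
  "bipartite G \<longleftrightarrow> (\<exists>h :: 'a \<Rightarrow> bool. \<forall>v w. (v, w) \<in> edges G \<longrightarrow> h v \<noteq> h w)"

lemma bipartite_insert_vertex:
  fixes h :: "'a \<Rightarrow> bool"
  assumes sg: "simple_graph G"
    and h: "\<forall>v w. (v, w) \<in> edges (induce G (verts G - {x})) \<longrightarrow> h v \<noteq> h w"
    and same_side: "\<forall>u\<in>nbrs G x. h u = h n"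
  shows "bipartite G"
proof -
  let ?h = "h(x := \<not> h n)"
  have "?h v \<noteq> ?h w" if vw: "(v, w) \<in> edges G" for v w
  proof -
    have "v \<noteq> w" using vw simple_graph_no_loop[OF sg] by blast
    moreover have "w \<in> nbrs G v" "v \<in> nbrs G w"
      using vw nbrs_iff_edge[OF sg] simple_graph_edge_sym[OF sg] by blast+
    moreover have "v \<noteq> x \<Longrightarrow> w \<noteq> x \<Longrightarrow> h v \<noteq> h w"
      using h vw simple_graph_edge_verts[OF sg vw] by auto
    ultimately show ?thesis using same_side by auto
  qed
  then show ?thesis unfolding bipartite_def by blast
qed

lemma contractible_bipartite: "contractible G \<Longrightarrow> \<forall>y\<in>verts G. edges (sphere G y) = {} \<Longrightarrow> bipartite G"
proof (induction rule: contractible.induct)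
  case (K1 G)
  then obtain v where v: "verts G = {v}" by (auto simp: card_Suc_eq)
  have "edges G = {}"
    using simple_graph_edge_verts[OF K1(1)] simple_graph_no_loop[OF K1(1)] v by fastforce
  then show ?case by (simp add: bipartite_def)
next
  case (step G x)
  have "bipartite (induce G (verts G - {x}))"
    using step.IH(2) step.prems edges_sphere_induce_subset by fastforce
  then obtain h :: "'a \<Rightarrow> bool" where h: "\<forall>v w. (v, w) \<in> edges (induce G (verts G - {x})) \<longrightarrow> h v \<noteq> h w"
    unfolding bipartite_def by blast
  have "card (nbrs G x) = 1" using contractible_edgeless[OF step(3)] step.prems step(2) by simp
  then obtain n where "nbrs G x = {n}" by (auto simp: card_Suc_eq)
  then show ?case using bipartite_insert_vertex[OF step(1) h, of n] by simp
qed

lemma B_class_1_bipartite: "B_class 1 L \<Longrightarrow> bipartite L"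
  using contractible_bipartite in_G_step_0_link_nonempty_edgeless by (fastforce simp: B_class_Suc[of 0])

lemma B_class_1_connected: "B_class 1 L \<Longrightarrow> connected_graph L"
  using contractible_imp_simply_connected[of L] by (auto simp: B_class_Suc[of 0] simply_connected_def)

lemma S_class_1_cycle_graph:
  assumes S1: "S_class 1 L"
  shows "cycle_graph L"
proof -
  have ig: "in_G_step (S_class 0) (B_class 0) L"
    and delete: "\<forall>x\<in>verts L. B_class 1 (induce L (verts L - {x}))"
    using S1 S_class_Suc[of 0 L] by auto
  have sg: "simple_graph L" using ig by (simp add: in_G_step_def)
  obtain v where v: "v \<in> verts L" using in_G_step_verts_nonempty[OF ig] by blast
  obtain n where "n \<in> nbrs L v" using in_G_step_0_link_nonempty_edgeless[OF ig v] by blast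
  then have "connected_graph L"
    using connected_graph_insert_vertex[OF sg v] B_class_1_connected delete v by blast
  moreover have "card (nbrs L x) = 2" if x: "x \<in> verts L" for x
  proof (cases "S_class 0 (sphere L x)")
    case True
    then show ?thesis by (simp add: S_class_0)
  next
    case False
    then have "card (nbrs L x) = 1" using ig x by (auto simp: in_G_step_def B_class_0)
    then obtain u where u: "nbrs L x = {u}" by (auto simp: card_Suc_eq)
    have "u \<in> verts L" "u \<noteq> x" using u nbrs_subset_verts not_in_nbrs_self[OF sg] by fastforce+
    then have "in_G_step (S_class 0) (B_class 0) (induce L (verts L - {u}))"
      using delete in_G_step_Suc[of 0 "induce L (verts L - {u})"] by simp
    moreover have "nbrs (induce L (verts L - {u})) x = {}"
      using nbrs_induce[of x "verts L - {u}" L] x \<open>u \<noteq> x\<close> u by auto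
    moreover have "x \<in> verts (induce L (verts L - {u}))" using x \<open>u \<noteq> x\<close> by simp
    ultimately show ?thesis using in_G_step_0_link_nonempty_edgeless by metis
  qed
  ultimately show ?thesis using sg by (simp add: cycle_graph_def)
qed

lemma class_1_connected: "S_class 1 L \<or> B_class 1 L \<Longrightarrow> connected_graph L"
  using S_class_1_cycle_graph[of L] B_class_1_connected[of L] by (auto simp: cycle_graph_def)

lemma bipartite_degree_sums_eq:
  assumes fin: "finite V" and sub: "E \<subseteq> V \<times> V" and sym: "\<And>a b. (a, b) \<in> E \<Longrightarrow> (b, a) \<in> E"
    and proper: "\<And>a b. (a, b) \<in> E \<Longrightarrow> h a \<noteq> h b"
  shows "(\<Sum>y\<in>{y\<in>V. h y}. card {z. (y, z) \<in> E}) = (\<Sum>y\<in>{y\<in>V. \<not> h y}. card {z. (y, z) \<in> E})"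
proof -
  let ?A = "{y\<in>V. h y}" and ?B = "{y\<in>V. \<not> h y}" and ?N = "\<lambda>y. {z. (y, z) \<in> E}"
  have fin_N: "finite (?N y)" for y
    using finite_subset[OF _ fin, of "?N y"] sub by blast
  have swap: "prod.swap ` Sigma ?A ?N = Sigma ?B ?N"
  proof (intro equalityI subsetI)
    fix p assume "p \<in> prod.swap ` Sigma ?A ?N"
    then obtain a b where "p = (b, a)" "h a" "(a, b) \<in> E" by auto
    then show "p \<in> Sigma ?B ?N" using sym proper sub by blast
  next
    fix p assume "p \<in> Sigma ?B ?N"
    then obtain b a where p: "p = (b, a)" "\<not> h b" "(b, a) \<in> E" by blast
    then have "(a, b) \<in> Sigma ?A ?N" using sym proper sub by blast
    then show "p \<in> prod.swap ` Sigma ?A ?N" using p(1) by force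
  qed
  have "card (Sigma ?B ?N) = card (Sigma ?A ?N)"
    unfolding swap[symmetric] by (rule card_image[OF inj_swap])
  then show ?thesis using fin fin_N by (simp add: card_SigmaI)
qed
text \<open>The degree sums of the two sides agree; if the ends lay on different sides these sums would
  be \<open>2 |A| - 1\<close> and \<open>2 |B| - 1\<close>, forcing \<open>|V| = 2 |A|\<close>.\<close>

lemma bipartite_path_ends_same_side:
  fixes h :: "'a \<Rightarrow> bool"
  assumes fin: "finite V" and sub: "E \<subseteq> V \<times> V" and sym: "\<And>a b. (a, b) \<in> E \<Longrightarrow> (b, a) \<in> E"
    and proper: "\<And>a b. (a, b) \<in> E \<Longrightarrow> h a \<noteq> h b"
    and ends: "u \<in> V" "w \<in> V" "u \<noteq> w"
    and deg: "\<And>y. y \<in> V \<Longrightarrow> card {z. (y, z) \<in> E} = (if y \<in> {u, w} then 1 else 2)"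
    and odd: "odd (card V)"
  shows "h u = h w"
proof (rule ccontr)
  assume "h u \<noteq> h w"
  have side_sum: "(\<Sum>y\<in>{y\<in>V. P y}. card {z. (y, z) \<in> E}) + 1 = 2 * card {y\<in>V. P y}"
    if "P a" "\<not> P b" "{a, b} = {u, w}" for P a b
  proof -
    let ?S = "{y\<in>V. P y}"
    have a: "a \<in> ?S" and S: "\<And>y. y \<in> ?S \<Longrightarrow> y \<in> {u, w} \<longleftrightarrow> y = a"
      using that ends by (auto simp: doubleton_eq_iff)
    have "(\<Sum>y\<in>?S. card {z. (y, z) \<in> E}) = (\<Sum>y\<in>?S. if y = a then 1 else 2)"
      using deg S by (intro sum.cong) auto
    also have "\<dots> = 1 + (\<Sum>y\<in>?S - {a}. 2)"
      using sum.remove[of ?S a "\<lambda>y. if y = a then 1 else 2 :: nat"] a fin by simp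
    also have "\<dots> = 1 + 2 * (card ?S - 1)" using a fin by simp
    finally have "(\<Sum>y\<in>?S. card {z. (y, z) \<in> E}) = 1 + 2 * (card ?S - 1)" .
    moreover have "card ?S > 0" using a fin by (auto simp: card_gt_0_iff)
    ultimately show ?thesis by linarith
  qed
  obtain a b where ab: "h a" "\<not> h b" "{a, b} = {u, w}"
    using \<open>h u \<noteq> h w\<close> by (cases "h u") (auto simp: insert_commute)
  have "card {y\<in>V. h y} = card {y\<in>V. \<not> h y}"
    using bipartite_degree_sums_eq[OF fin sub sym proper] side_sum[of h a b]
      side_sum[of "\<lambda>y. \<not> h y" b a] ab
    by (simp add: insert_commute)
  moreover have "card V = card {y\<in>V. h y} + card {y\<in>V. \<not> h y}"
  proof -
    have "V = {y\<in>V. h y} \<union> {y\<in>V. \<not> h y}" by blast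
    then show ?thesis using fin card_Un_disjoint[of "{y\<in>V. h y}" "{y\<in>V. \<not> h y}"] by auto
  qed
  ultimately show False using odd by simp
qed
lemma S_class_1_even_bipartite:
  assumes S1: "S_class 1 L" and even: "even (card (verts L))"
  shows "bipartite L"
proof -
  have sg: "simple_graph L" and deg2: "\<forall>x\<in>verts L. card (nbrs L x) = 2"
    using S_class_1_cycle_graph[OF S1] unfolding cycle_graph_def by blast+
  have delete: "\<forall>x\<in>verts L. B_class 1 (induce L (verts L - {x}))" using S1 S_class_Suc[of 0 L] by auto
  obtain v where v: "v \<in> verts L"
    using S1 in_G_step_verts_nonempty[OF in_G_step_Suc[of 0 L]] by auto
  obtain u w where uw: "nbrs L v = {u, w}" "u \<noteq> w" using deg2 v card_2_iff[of "nbrs L v"] by blast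
  let ?L' = "induce L (verts L - {v})" and ?V' = "verts L - {v}"
  obtain h :: "'a \<Rightarrow> bool" where h: "\<forall>a b. (a, b) \<in> edges ?L' \<longrightarrow> h a \<noteq> h b"
    using B_class_1_bipartite[of ?L'] delete v unfolding bipartite_def by blast
  have uw_V': "u \<in> ?V'" "w \<in> ?V'"
    using uw(1) nbrs_subset_verts[of L v] not_in_nbrs_self[OF sg, of v] by blast+
  have deg: "card {z. (y, z) \<in> edges ?L'} = (if y \<in> {u, w} then 1 else 2)" if y: "y \<in> ?V'" for y
  proof -
    have "{z. (y, z) \<in> edges ?L'} = nbrs L y - {v}"
      using y simple_graph_edge_verts[OF sg] by (auto simp: nbrs_def)
    moreover have "v \<in> nbrs L y \<longleftrightarrow> y \<in> {u, w}" using nbrs_sym[OF sg] uw(1) by blast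
    ultimately show ?thesis using deg2 y by (auto simp: card_Diff_singleton)
  qed
  have "h u = h w"
  proof (rule bipartite_path_ends_same_side[where V = ?V' and E = "edges ?L'"])
    show "finite ?V'" using simple_graph_finite[OF sg] by simp
    have "card (verts L) > 0" using v simple_graph_finite[OF sg] card_gt_0_iff by blast
    then show "odd (card ?V')" using even v by (simp add: card_Diff_singleton)
    show "edges ?L' \<subseteq> ?V' \<times> ?V'" by auto
    show "\<And>a b. (a, b) \<in> edges ?L' \<Longrightarrow> (b, a) \<in> edges ?L'"
      using simple_graph_edge_sym[OF sg] by auto
  qed (use uw uw_V' deg h in auto)
  then have "\<forall>x\<in>nbrs L v. h x = h u" using uw by auto
  then show ?thesis using bipartite_insert_vertex[OF sg h] by blast
qed

lemma S_class_2: "S_class 2 G \<longleftrightarrow> in_G_step (S_class 1) (B_class 1) G \<and> \<not> contractible G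
   \<and> (\<forall>x\<in>verts G. B_class 2 (induce G (verts G - {x})))"
  using S_class_Suc[of 1 G] by (simp add: numeral_2_eq_2)

lemma B_class_2: "B_class 2 G \<longleftrightarrow> contractible G \<and> in_G_step (S_class 1) (B_class 1) G
   \<and> S_class 1 (induce G (boundary_verts (B_class 1) G))"
  using B_class_Suc[of 1 G] by (simp add: numeral_2_eq_2)

lemma class_2_simply_connected:
  assumes "S_class 2 H \<or> B_class 2 H"
  shows "simply_connected H"
proof (cases "B_class 2 H")
  case True
  then show ?thesis unfolding B_class_2 by (blast intro: contractible_imp_simply_connected)
next
  case False
  then have "S_class 2 H" using assms by simp
  then have ig: "in_G_step (S_class 1) (B_class 1) H"
    and delete: "\<forall>x\<in>verts H. B_class 2 (induce H (verts H - {x}))"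
    unfolding S_class_2 by simp_all
  obtain x where x: "x \<in> verts H" using in_G_step_verts_nonempty[OF ig] by blast
  have "simply_connected (induce H (verts H - {x}))"
    using delete x unfolding B_class_2 by (blast intro: contractible_imp_simply_connected)
  moreover have "connected_graph (sphere H x)"
    using ig x class_1_connected[of "sphere H x"] by (simp add: in_G_step_def)
  moreover have "simple_graph H" using ig by (simp add: in_G_step_def)
  ultimately show ?thesis using simply_connected_insert_vertex[OF _ x] by blast
qed
section \<open>Global colourings from compatible local colourings\<close>

definition star :: "'a graph \<Rightarrow> 'a \<Rightarrow> 'a set" where
  "star G a = insert a (nbrs G a)"

definition agree_on :: "'a set \<Rightarrow> ('a \<Rightarrow> nat) \<Rightarrow> ('a \<Rightarrow> nat) \<Rightarrow> bool" where
  "agree_on S f g \<longleftrightarrow> (\<forall>v\<in>S. f v = g v)"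

lemma star_subset_verts: "z \<in> verts H \<Longrightarrow> star H z \<subseteq> verts H"
  using nbrs_subset_verts[of H z] by (auto simp: star_def)

text \<open>Monodromy: on a simply connected graph, continuing one local colouring along walks does
  not depend on the walk, and the centre colours of the continued colourings form a global
  proper colouring.\<close>

locale local_colorings =
  fixes G :: "'a graph" and Col :: "'a \<Rightarrow> ('a \<Rightarrow> nat) set"
  assumes simple: "simple_graph G"
    and continue_unique: "\<And>a b f. (a, b) \<in> edges G \<Longrightarrow> f \<in> Col a \<Longrightarrow>
       \<exists>!g. g \<in> Col b \<and> agree_on (star G a \<inter> star G b) g f"
    and continue_triangle: "\<And>a b c f g1 g2 g3. (a, b) \<in> edges G \<Longrightarrow> (b, c) \<in> edges G \<Longrightarrow>
       (a, c) \<in> edges G \<Longrightarrow> f \<in> Col a \<Longrightarrow>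
       g1 \<in> Col b \<Longrightarrow> agree_on (star G a \<inter> star G b) g1 f \<Longrightarrow>
       g2 \<in> Col c \<Longrightarrow> agree_on (star G b \<inter> star G c) g2 g1 \<Longrightarrow>
       g3 \<in> Col c \<Longrightarrow> agree_on (star G a \<inter> star G c) g3 f \<Longrightarrow> g2 = g3"
    and proper_at_center: "\<And>a f v. f \<in> Col a \<Longrightarrow> v \<in> nbrs G a \<Longrightarrow> f v \<noteq> f a"
begin

text \<open>Walks are allowed to pause at a vertex, so that the \<open>repeat\<close> step of homotopies stays
  inside the class of walks along which we continue.\<close>

definition lazy_edges :: "('a \<times> 'a) set" where
  "lazy_edges = edges G \<union> Id_on (verts G)"

definition continue :: "'a \<Rightarrow> 'a \<Rightarrow> ('a \<Rightarrow> nat) \<Rightarrow> ('a \<Rightarrow> nat)" where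
  "continue a b f = (if a = b then f else THE g. g \<in> Col b \<and> agree_on (star G a \<inter> star G b) g f)"

fun transport :: "'a list \<Rightarrow> ('a \<Rightarrow> nat) \<Rightarrow> ('a \<Rightarrow> nat)" where
  "transport (x # y # xs) f = transport (y # xs) (continue x y f)"
| "transport _ f = f"

lemma edges_subset_lazy_edges: "edges G \<subseteq> lazy_edges"
  by (auto simp: lazy_edges_def)

lemma continue_edge:
  assumes ab: "(a, b) \<in> edges G" and f: "f \<in> Col a"
  shows "continue a b f \<in> Col b \<and> agree_on (star G a \<inter> star G b) (continue a b f) f"
  using theI'[OF continue_unique[OF ab f]] simple_graph_no_loop[OF simple] ab
  by (auto simp: continue_def)

lemma continue_eqI:
  assumes ab: "(a, b) \<in> edges G" and f: "f \<in> Col a"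
    and g: "g \<in> Col b" "agree_on (star G a \<inter> star G b) g f"
  shows "continue a b f = g"
  using the1_equality[OF continue_unique[OF ab f]] g simple_graph_no_loop[OF simple] ab
  by (auto simp: continue_def)

lemma continue_back:
  assumes ab: "(a, b) \<in> edges G" and f: "f \<in> Col a"
  shows "continue b a (continue a b f) = f"
proof (rule continue_eqI)
  show "(b, a) \<in> edges G" using simple_graph_edge_sym[OF simple ab] .
  show "continue a b f \<in> Col b" "f \<in> Col a" using continue_edge[OF ab f] f by auto
  show "agree_on (star G b \<inter> star G a) f (continue a b f)"
    using continue_edge[OF ab f] by (auto simp: agree_on_def)
qed

lemma continue_around_triangle:
  assumes "(a, b) \<in> edges G" "(b, c) \<in> edges G" "(a, c) \<in> edges G" and f: "f \<in> Col a"
  shows "continue b c (continue a b f) = continue a c f"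
  using assms continue_edge continue_triangle by meson

lemma continue_lazy:
  assumes "(a, b) \<in> lazy_edges" and "f \<in> Col a"
  shows "continue a b f \<in> Col b"
  using assms continue_edge[of a b f] by (cases "a = b") (auto simp: continue_def lazy_edges_def)

lemma transport_in_Col:
  "walk lazy_edges xs \<Longrightarrow> xs \<noteq> [] \<Longrightarrow> f \<in> Col (hd xs) \<Longrightarrow> transport xs f \<in> Col (last xs)"
  by (induction xs f rule: transport.induct) (auto simp: continue_lazy)

lemma transport_append: "transport (us @ x # vs) f = transport (x # vs) (transport (us @ [x]) f)"
proof (induction us arbitrary: f)
  case (Cons u us)
  then show ?case by (cases us) auto
qed simp

lemma transport_backtrack:
  assumes "walk lazy_edges (us @ [a])" "f \<in> Col (hd (us @ [a]))" "(a, b) \<in> edges G"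
  shows "transport (us @ [a, b, a] @ vs) f = transport (us @ [a] @ vs) f"
proof -
  have "transport (us @ [a]) f \<in> Col a" using transport_in_Col[OF assms(1)] assms(2) by simp
  then show ?thesis
    using transport_append[of us a "b # a # vs" f] transport_append[of us a vs f]
      continue_back[OF assms(3)] by simp
qed

lemma transport_repeat: "transport (us @ [a, a] @ vs) f = transport (us @ [a] @ vs) f"
  using transport_append[of us a "a # vs" f] transport_append[of us a vs f] by (simp add: continue_def)

lemma transport_triangle:
  assumes "walk lazy_edges (us @ [a])" "f \<in> Col (hd (us @ [a]))"
    and "(a, b) \<in> edges G" "(b, c) \<in> edges G" "(a, c) \<in> edges G"
  shows "transport (us @ [a, b, c] @ vs) f = transport (us @ [a, c] @ vs) f"
proof -
  have "transport (us @ [a]) f \<in> Col a" using transport_in_Col[OF assms(1)] assms(2) by simp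
  then show ?thesis
    using transport_append[of us a "b # c # vs" f] transport_append[of us a "c # vs" f]
      continue_around_triangle[OF assms(3-5)] by simp
qed

lemma htp_step_transport:
  assumes "htp_step G xs ys"
  shows "(walk lazy_edges xs \<longleftrightarrow> walk lazy_edges ys) \<and>
    (walk lazy_edges xs \<longrightarrow> (\<forall>f\<in>Col (hd xs). transport xs f = transport ys f))"
  using assms
proof (induction rule: htp_step.induct)
  case (backtrack a b us vs)
  then have "(a, b) \<in> lazy_edges" "(b, a) \<in> lazy_edges"
    using simple_graph_edge_sym[OF simple] edges_subset_lazy_edges by auto
  then show ?case
    using backtrack transport_backtrack walk_append_Cons[of lazy_edges us a "b # a # vs"]
      walk_append_Cons[of lazy_edges us a vs] hd_append_Cons[of us a]
    by (metis append_Cons append_Nil successively.simps(3))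
next
  case (repeat a us vs)
  then have "(a, a) \<in> lazy_edges" by (auto simp: lazy_edges_def)
  then show ?case
    using transport_repeat walk_append_Cons[of lazy_edges us a "a # vs"] walk_append_Cons[of lazy_edges us a vs]
    by simp
next
  case (triangle a b c us vs)
  then have "(a, b) \<in> lazy_edges" "(b, c) \<in> lazy_edges" "(a, c) \<in> lazy_edges"
    using edges_subset_lazy_edges by auto
  then show ?case
    using triangle transport_triangle walk_append_Cons[of lazy_edges us a "b # c # vs"]
      walk_append_Cons[of lazy_edges us a "c # vs"] hd_append_Cons[of us a]
    by (metis append_Cons append_Nil successively.simps(3))
qed

lemma homotopic_transport:
  "homotopic G xs ys \<Longrightarrow> xs \<noteq> [] \<Longrightarrow> walk lazy_edges xs \<Longrightarrow>
   walk lazy_edges ys \<and> (\<forall>f\<in>Col (hd xs). transport ys f = transport xs f)"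
  unfolding homotopic_def
proof (induction rule: rtranclp_induct)
  case (step y z)
  have "y \<noteq> [] \<and> hd y = hd xs" using homotopic_ends[of G xs y] step unfolding homotopic_def by auto
  moreover have "hd z = hd y" using step(2) htp_step_ends by metis
  ultimately show ?case using step htp_step_transport[of y z] htp_step_transport[of z y] by auto
qed simp

lemma transport_rev:
  "walk lazy_edges xs \<Longrightarrow> xs \<noteq> [] \<Longrightarrow> f \<in> Col (hd xs) \<Longrightarrow> transport (rev xs) (transport xs f) = f"
proof (induction xs f rule: transport.induct)
  case (1 x y xs f)
  have xy: "(x, y) \<in> lazy_edges" and f: "continue x y f \<in> Col y" using 1 continue_lazy by auto
  have "transport (rev (x # y # xs)) (transport (x # y # xs) f)
      = transport [y, x] (transport (rev xs @ [y]) (transport (y # xs) (continue x y f)))"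
    using transport_append[of "rev xs" y "[x]"] by simp
  also have "\<dots> = continue y x (continue x y f)" using 1 f by simp
  also have "\<dots> = f"
  proof (cases "x = y")
    case False
    then have "(x, y) \<in> edges G" using xy by (auto simp: lazy_edges_def)
    then show ?thesis using continue_back 1 by simp
  qed (simp add: continue_def)
  finally show ?case .
qed auto

text \<open>The two walks form a closed walk, which is null-homotopic.\<close>

lemma transport_path_independent:
  assumes sc: "simply_connected G" and x0: "x0 \<in> verts G" and f0: "f0 \<in> Col x0"
    and p: "p \<noteq> []" "hd p = x0" "last p = v" "walk (edges G) p"
    and q: "q \<noteq> []" "hd q = x0" "last q = v" "walk (edges G) q"
  shows "transport p f0 = transport q f0"
proof -
  have sym: "sym (edges G)" and edges_verts: "edges G \<subseteq> verts G \<times> verts G"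
    using simple by (auto simp: simple_graph_def)
  obtain p0 where p0: "p = p0 @ [v]" using p by (metis append_butlast_last_id)
  obtain q' where q': "rev q = v # q'" using q by (cases "rev q") (auto simp: hd_rev[symmetric])
  have walk_rq: "walk (edges G) (rev q)" using walk_rev[OF sym q(4)] .
  define r where "r = p0 @ v # q'"
  have walk_r: "walk (edges G) r"
    unfolding r_def using walk_append_Cons[of "edges G" p0 v q'] p(4) walk_rq p0 q' by simp
  have hd_r: "hd r = x0" unfolding r_def using hd_append_Cons[of p0 v q'] p(2) p0 by simp
  have "last r = x0" unfolding r_def using q q' last_rev[of q] by (cases q') auto
  moreover have "set r \<subseteq> verts G" using walk_set[OF walk_r _ _ edges_verts] hd_r x0 by (simp add: r_def)
  ultimately have "closed_path G r" using walk_r hd_r by (simp add: closed_path_iff_walk r_def)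
  then obtain z where "homotopic G r [z]" using sc by (auto simp: simply_connected_def)
  then have "transport r f0 = f0"
    using homotopic_transport[of r "[z]"] successively_mono[OF walk_r edges_subset_lazy_edges[THEN subsetD]]
      f0 hd_r by (auto simp: r_def)
  moreover have "transport r f0 = transport (rev q) (transport p f0)"
    unfolding r_def using transport_append[of p0 v q' f0] p0 q' by simp
  moreover have "transport q (transport (rev q) (transport p f0)) = transport p f0"
    using transport_rev[of "rev q" "transport p f0"] successively_mono[OF walk_rq edges_subset_lazy_edges[THEN subsetD]]
      transport_in_Col[of p f0] successively_mono[OF p(4) edges_subset_lazy_edges[THEN subsetD]] p f0 q q'
    by (simp add: hd_rev)
  ultimately show ?thesis by simp
qed

theorem global_coloring:
  assumes sc: "simply_connected G" and x0: "x0 \<in> verts G" and f0: "f0 \<in> Col x0"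
  shows "\<exists>c. (\<forall>v w. (v, w) \<in> edges G \<longrightarrow> c v \<noteq> c w) \<and> (\<forall>v\<in>verts G. \<exists>f\<in>Col v. c v = f v)
    \<and> (\<forall>v\<in>star G x0. c v = f0 v)"
proof -
  define walks where "walks v = {p. p \<noteq> [] \<and> hd p = x0 \<and> last p = v \<and> walk (edges G) p}" for v
  have walks_nonempty: "walks v \<noteq> {}" if v: "v \<in> verts G" for v
  proof -
    have "(x0, v) \<in> (edges G)\<^sup>*" using sc x0 v by (auto simp: simply_connected_def connected_graph_def)
    then show ?thesis using rtrancl_imp_walk unfolding walks_def by fast
  qed
  have transport_walks: "transport p f0 \<in> Col v" if p: "p \<in> walks v" for p v
    using p f0 transport_in_Col[of p f0] successively_mono[of _ p, OF _ edges_subset_lazy_edges[THEN subsetD]]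
    unfolding walks_def by auto
  define c where "c v = transport (SOME p. p \<in> walks v) f0 v" for v
  have independent: "transport p f0 = transport q f0" if "p \<in> walks v" "q \<in> walks v" for p q v
    using that unfolding walks_def by (auto intro!: transport_path_independent[OF sc x0 f0])
  have c: "c v = transport p f0 v" if "p \<in> walks v" for p v
    using independent[OF someI[of "\<lambda>p. p \<in> walks v", OF that] that] by (simp add: c_def)
  have "c v \<noteq> c w" if vw: "(v, w) \<in> edges G" for v w
  proof -
    obtain p where p: "p \<in> walks v" using walks_nonempty simple_graph_edge_verts[OF simple vw] by blast
    then have "p \<noteq> []" "last p = v" by (simp_all add: walks_def)
    then obtain p0 where p0: "p = p0 @ [v]" by (metis append_butlast_last_id)
    have "p0 @ [v, w] \<in> walks w"
      using p p0 vw walk_snoc[of "edges G" p0 v w] hd_append_Cons[of p0 v "[w]"] unfolding walks_def by auto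
    then have "c w = continue v w (transport p f0) w"
      using c transport_append[of p0 v "[w]" f0] p0 by simp
    also have "\<dots> = transport p f0 w"
      using continue_edge[OF vw transport_walks[OF p]] simple vw
      by (auto simp: agree_on_def star_def nbrs_iff_edge)
    also have "\<dots> \<noteq> transport p f0 v"
      using proper_at_center[OF transport_walks[OF p]] vw simple by (simp add: nbrs_iff_edge)
    finally show ?thesis using c[OF p] by simp
  qed
  moreover have "\<exists>f\<in>Col v. c v = f v" if "v \<in> verts G" for v
    using walks_nonempty[OF that] c transport_walks by blast
  moreover have "c v = f0 v" if v: "v \<in> star G x0" for v
  proof (cases "v = x0")
    case True
    then show ?thesis using c[of "[x0]"] by (simp add: walks_def)
  next
    case False
    then have x0v: "(x0, v) \<in> edges G" using v simple by (auto simp: star_def nbrs_iff_edge)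
    then have "c v = continue x0 v f0 v" using c[of "[x0, v]"] by (simp add: walks_def)
    then show ?thesis using continue_edge[OF x0v f0] v by (auto simp: agree_on_def star_def)
  qed
  ultimately show ?thesis by blast
qed

end

section \<open>Colourings of simply connected surfaces\<close>

definition proper_coloring_on :: "'a graph \<Rightarrow> 'a set \<Rightarrow> nat set \<Rightarrow> ('a \<Rightarrow> nat) \<Rightarrow> bool" where
  "proper_coloring_on H S C g \<longleftrightarrow>
     (\<forall>v\<in>S. g v \<in> C) \<and> (\<forall>v\<in>S. \<forall>w\<in>S. (v, w) \<in> edges H \<longrightarrow> g v \<noteq> g w)"

text \<open>The value \<open>0\<close> off the star is a normalisation: it makes a local colouring determined by
  its values on the star.\<close>

definition star_colorings :: "'a graph \<Rightarrow> nat set \<Rightarrow> 'a \<Rightarrow> ('a \<Rightarrow> nat) set" where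
  "star_colorings G C a = {f. proper_coloring_on G (star G a) C f \<and> (\<forall>v. v \<notin> star G a \<longrightarrow> f v = 0)}"

definition connected_bipartite_links :: "'a graph \<Rightarrow> bool" where
  "connected_bipartite_links H \<longleftrightarrow> (\<forall>y\<in>verts H. connected_graph (sphere H y) \<and> bipartite (sphere H y))"

lemma proper_coloring_onD:
  "proper_coloring_on H S C g \<Longrightarrow> v \<in> S \<Longrightarrow> g v \<in> C"
  "proper_coloring_on H S C g \<Longrightarrow> v \<in> S \<Longrightarrow> w \<in> S \<Longrightarrow> (v, w) \<in> edges H \<Longrightarrow> g v \<noteq> g w"
  by (auto simp: proper_coloring_on_def)

lemma proper_coloring_on_subset: "proper_coloring_on H S C g \<Longrightarrow> T \<subseteq> S \<Longrightarrow> proper_coloring_on H T C g"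
  by (auto simp: proper_coloring_on_def)

lemma star_coloringsD:
  "f \<in> star_colorings G C a \<Longrightarrow> proper_coloring_on G (star G a) C f"
  "f \<in> star_colorings G C a \<Longrightarrow> v \<in> star G a \<Longrightarrow> f v \<in> C"
  "f \<in> star_colorings G C a \<Longrightarrow> v \<in> star G a \<Longrightarrow> w \<in> star G a \<Longrightarrow> (v, w) \<in> edges G \<Longrightarrow> f v \<noteq> f w"
  by (auto simp: star_colorings_def proper_coloring_on_def)

lemma star_colorings_eqI:
  assumes "f \<in> star_colorings G C a" "g \<in> star_colorings G C a" "\<forall>v\<in>star G a. f v = g v"
  shows "f = g"
proof
  fix v show "f v = g v" using assms by (cases "v \<in> star G a") (auto simp: star_colorings_def)
qed

lemma card3_third_unique:
  assumes "card C = 3" "a \<in> C" "b \<in> C" "a \<noteq> b" "x \<in> C" "y \<in> C" "x \<notin> {a, b}" "y \<notin> {a, b}"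
  shows "x = y"
proof (rule ccontr)
  assume "x \<noteq> y"
  then have "card {a, b, x, y} = 4" using assms by auto
  moreover have "finite C" using assms(1) by (metis card.infinite zero_neq_numeral)
  then have "card {a, b, x, y} \<le> card C" using assms by (intro card_mono) auto
  ultimately show False using assms(1) by simp
qed

lemma card3_obtain_third:
  assumes "card C = 3" "a \<in> C" "b \<in> C"
  obtains c where "c \<in> C" "c \<noteq> a" "c \<noteq> b"
proof -
  have "\<not> C \<subseteq> {a, b}"
  proof
    assume "C \<subseteq> {a, b}"
    then have "card C \<le> card {a, b}" by (simp add: card_mono)
    also have "\<dots> \<le> 2" by (cases "a = b") simp_all
    finally show False using assms(1) by simp
  qed
  then show ?thesis using that by blast
qed

lemma connected_graph_propagate:
  assumes "connected_graph L" "y \<in> verts L" "P y" "\<And>v w. P v \<Longrightarrow> (v, w) \<in> edges L \<Longrightarrow> P w"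
  shows "\<forall>v\<in>verts L. P v"
proof
  fix v assume "v \<in> verts L"
  then have "(y, v) \<in> (edges L)\<^sup>*" using assms(1,2) by (auto simp: connected_graph_def)
  then show "P v" by (induction rule: rtrancl_induct) (use assms(3,4) in blast)+
qed

text \<open>Along an edge \<open>v w\<close> of the connected sphere, the colour of \<open>w\<close> is the one left over by
  the centre and \<open>v\<close>.\<close>

lemma proper_coloring_star_rigid:
  assumes sg: "simple_graph H" and conn: "connected_graph (sphere H z)" and c3: "card C = 3"
    and g: "proper_coloring_on H (star H z) C g" and g': "proper_coloring_on H (star H z) C g'"
    and y: "y \<in> nbrs H z" and eq: "g z = g' z" "g y = g' y"
  shows "\<forall>v\<in>star H z. g v = g' v"
proof -
  have "\<forall>v\<in>verts (sphere H z). g v = g' v"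
  proof (rule connected_graph_propagate[OF conn, of y])
    fix v w assume gv: "g v = g' v" and vw: "(v, w) \<in> edges (sphere H z)"
    then have stars: "v \<in> star H z" "w \<in> star H z" "z \<in> star H z" and e: "(v, w) \<in> edges H"
      by (auto simp: edges_sphere star_def)
    then have "(z, v) \<in> edges H" "(z, w) \<in> edges H" using vw sg by (auto simp: edges_sphere nbrs_iff_edge)
    then have "g w \<notin> {g z, g v}" "g' w \<notin> {g' z, g' v}" "g z \<noteq> g v"
      using proper_coloring_onD(2)[OF g] proper_coloring_onD(2)[OF g'] stars e
        simple_graph_edge_sym[OF sg] by fastforce+
    then show "g w = g' w"
      using card3_third_unique[OF c3, of "g z" "g v" "g w" "g' w"] proper_coloring_onD(1)[OF g]
        proper_coloring_onD(1)[OF g'] stars eq gv by auto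
  qed (use y eq in auto)
  then show ?thesis using eq by (auto simp: star_def)
qed

lemma proper_coloring_rigid:
  assumes sg: "simple_graph H" and conn: "connected_graph H"
    and links: "\<forall>y\<in>verts H. connected_graph (sphere H y)" and c3: "card C = 3"
    and g: "proper_coloring_on H (verts H) C g" and g': "proper_coloring_on H (verts H) C g'"
    and y: "y \<in> verts H" and z: "z \<in> nbrs H y" and eq: "g y = g' y" "g z = g' z"
  shows "\<forall>v\<in>verts H. g v = g' v"
proof -
  have "\<forall>v\<in>verts H. g v = g' v \<and> (\<exists>u\<in>nbrs H v. g u = g' u)"
  proof (rule connected_graph_propagate[OF conn y])
    fix v w assume P: "g v = g' v \<and> (\<exists>u\<in>nbrs H v. g u = g' u)" and vw: "(v, w) \<in> edges H"
    have v: "v \<in> verts H" using simple_graph_edge_verts[OF sg vw] by simp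
    obtain u where u: "u \<in> nbrs H v" "g u = g' u" using P by blast
    have "\<forall>x\<in>star H v. g x = g' x"
    proof (rule proper_coloring_star_rigid[where g = g and g' = g', OF sg _ c3 _ _ u(1) _ u(2)])
      show "connected_graph (sphere H v)" using links v by blast
      show "proper_coloring_on H (star H v) C g" "proper_coloring_on H (star H v) C g'"
        using proper_coloring_on_subset g g' star_subset_verts[OF v] by blast+
      show "g v = g' v" using P by blast
    qed
    moreover have "w \<in> star H v" "v \<in> nbrs H w"
      using vw simple_graph_edge_sym[OF sg vw] by (auto simp: star_def nbrs_iff_edge_sym[OF sg])
    ultimately have "g w = g' w" "v \<in> nbrs H w" "g v = g' v" using P by auto
    then show "g w = g' w \<and> (\<exists>u\<in>nbrs H w. g u = g' u)" by blast
  qed (use eq z in blast)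
  then show ?thesis by blast
qed

lemma star_coloring_from_bipartite_sphere:
  assumes sg: "simple_graph H" and bip: "bipartite (sphere H z)" and y: "y \<in> nbrs H z"
    and colors: "\<alpha> \<in> C" "\<beta> \<in> C" "\<gamma> \<in> C" "\<alpha> \<noteq> \<beta>" "\<alpha> \<noteq> \<gamma>" "\<beta> \<noteq> \<gamma>"
  shows "\<exists>g\<in>star_colorings H C z. g z = \<alpha> \<and> g y = \<beta> \<and> (\<forall>w\<in>nbrs H z. (w, y) \<in> edges H \<longrightarrow> g w = \<gamma>)"
proof -
  obtain h :: "'a \<Rightarrow> bool" where h: "\<forall>a b. (a, b) \<in> edges (sphere H z) \<longrightarrow> h a \<noteq> h b"
    using bip unfolding bipartite_def by blast
  define g where
    "g v = (if v = z then \<alpha> else if v \<in> nbrs H z then (if h v = h y then \<beta> else \<gamma>) else 0)" for v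
  have z: "z \<notin> nbrs H z" using not_in_nbrs_self[OF sg] .
  have "g v \<noteq> g w" if "v \<in> star H z" "w \<in> star H z" "(v, w) \<in> edges H" for v w
    using that h colors z simple_graph_no_loop[OF sg]
    by (auto simp: g_def star_def edges_sphere split: if_splits)
  then have "g \<in> star_colorings H C z"
    using colors by (auto simp: star_colorings_def proper_coloring_on_def g_def star_def)
  moreover have "g w = \<gamma>" if "w \<in> nbrs H z" "(w, y) \<in> edges H" for w
    using that h y z by (auto simp: g_def edges_sphere)
  moreover have "g z = \<alpha>" "g y = \<beta>" using y z by (auto simp: g_def)
  ultimately show ?thesis by blast
qed

lemma star_colorings_rigid:
  assumes sg: "simple_graph H" and conn: "connected_graph (sphere H z)" and c3: "card C = 3"
    and g: "g \<in> star_colorings H C z" and g': "g' \<in> star_colorings H C z"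
    and y: "y \<in> nbrs H z" and eq: "g z = g' z" "g y = g' y"
  shows "g = g'"
  using proper_coloring_star_rigid[OF sg conn c3 star_coloringsD(1)[OF g] star_coloringsD(1)[OF g'] y eq]
  by (rule star_colorings_eqI[OF g g'])

text \<open>The continuation is the star colouring of \<open>b\<close> keeping the colours of \<open>a\<close> and \<open>b\<close>: the
  common neighbours of \<open>a\<close> and \<open>b\<close> all get the third colour, both in \<open>f\<close> and in \<open>g\<close>.\<close>

lemma three_star_coloring_continue:
  assumes sg: "simple_graph H" and links: "connected_bipartite_links H" and c3: "card C = 3"
    and ab: "(a, b) \<in> edges H" and f: "f \<in> star_colorings H C a"
  shows "\<exists>g\<in>star_colorings H C b. agree_on (star H a \<inter> star H b) g f"
proof -
  have b: "b \<in> verts H" and a_b: "a \<in> nbrs H b" and b_a: "b \<in> nbrs H a"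
    using ab simple_graph_edge_verts[OF sg ab] nbrs_iff_edge[OF sg] simple_graph_edge_sym[OF sg] by blast+
  have a_star: "a \<in> star H a" "b \<in> star H a" using b_a by (auto simp: star_def)
  have fab: "f a \<in> C" "f b \<in> C" "f b \<noteq> f a"
    using star_coloringsD(2,3)[OF f] a_star simple_graph_edge_sym[OF sg ab] by auto
  obtain \<gamma> where \<gamma>: "\<gamma> \<in> C" "\<gamma> \<noteq> f b" "\<gamma> \<noteq> f a" using card3_obtain_third[OF c3 fab(2,1)] .
  obtain g where g: "g \<in> star_colorings H C b" "g b = f b" "g a = f a"
    and g_common: "\<forall>w\<in>nbrs H b. (w, a) \<in> edges H \<longrightarrow> g w = \<gamma>"
    using star_coloring_from_bipartite_sphere[OF sg _ a_b fab(2,1) \<gamma>(1) fab(3) \<gamma>(2)[symmetric] \<gamma>(3)[symmetric]]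
      links b by (auto simp: connected_bipartite_links_def)
  have "g v = f v" if v: "v \<in> star H a \<inter> star H b" for v
  proof (cases "v = a \<or> v = b")
    case False
    then have "v \<in> nbrs H a" "v \<in> nbrs H b" using v by (auto simp: star_def)
    then have "(v, a) \<in> edges H" "(v, b) \<in> edges H" "v \<in> star H a"
      by (auto simp: star_def nbrs_iff_edge_sym[OF sg])
    moreover have "f v \<in> C" "f v \<notin> {f b, f a}"
      using star_coloringsD(2,3)[OF f] a_star \<open>v \<in> star H a\<close> \<open>(v, a) \<in> edges H\<close>
        \<open>(v, b) \<in> edges H\<close> by auto
    ultimately show ?thesis
      using g_common \<open>v \<in> nbrs H b\<close> card3_third_unique[OF c3 fab(2,1) fab(3) \<gamma>(1), of "f v"] \<gamma>
      by auto
  qed (use g in auto)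
  then show ?thesis using g(1) by (auto simp: agree_on_def)
qed

lemma local_colorings_three_colors:
  assumes sg: "simple_graph H" and links: "connected_bipartite_links H" and c3: "card C = 3"
  shows "local_colorings H (star_colorings H C)"
proof
  fix a b f assume ab: "(a, b) \<in> edges H" and f: "f \<in> star_colorings H C a"
  obtain g where g: "g \<in> star_colorings H C b" "agree_on (star H a \<inter> star H b) g f"
    using three_star_coloring_continue[OF sg links c3 ab f] by blast
  have b: "b \<in> verts H" and a_b: "a \<in> nbrs H b" and b_a: "b \<in> nbrs H a"
    using ab simple_graph_edge_verts[OF sg ab] nbrs_iff_edge[OF sg] simple_graph_edge_sym[OF sg] by blast+
  have "g' = g" if "g' \<in> star_colorings H C b" "agree_on (star H a \<inter> star H b) g' f" for g'
  proof (rule star_colorings_rigid[OF sg _ c3 that(1) g(1) a_b])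
    show "connected_graph (sphere H b)" using links b by (simp add: connected_bipartite_links_def)
    show "g' b = g b" "g' a = g a" using that(2) g(2) a_b b_a by (auto simp: agree_on_def star_def)
  qed
  then show "\<exists>!g. g \<in> star_colorings H C b \<and> agree_on (star H a \<inter> star H b) g f"
    using g by blast
next
  fix a b c f g1 g2 g3
  assume abc: "(a, b) \<in> edges H" "(b, c) \<in> edges H" "(a, c) \<in> edges H" and f: "f \<in> star_colorings H C a"
    and g1: "g1 \<in> star_colorings H C b" "agree_on (star H a \<inter> star H b) g1 f"
    and g2: "g2 \<in> star_colorings H C c" "agree_on (star H b \<inter> star H c) g2 g1"
    and g3: "g3 \<in> star_colorings H C c" "agree_on (star H a \<inter> star H c) g3 f"
  have "a \<in> star H a \<inter> star H b \<inter> star H c" "c \<in> star H a \<inter> star H b \<inter> star H c"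
    using abc nbrs_iff_edge[OF sg] nbrs_iff_edge_sym[OF sg] unfolding star_def by blast+
  then have "g2 c = g3 c" "g2 a = g3 a" using g1(2) g2(2) g3(2) by (auto simp: agree_on_def)
  moreover have "a \<in> nbrs H c" "c \<in> verts H"
    using abc simple_graph_edge_verts[OF sg] nbrs_iff_edge[OF sg] simple_graph_edge_sym[OF sg] by blast+
  ultimately show "g2 = g3"
    using star_colorings_rigid[OF sg _ c3 g2(1) g3(1)] links by (auto simp: connected_bipartite_links_def)
next
  fix a f v assume "f \<in> star_colorings H C a" "v \<in> nbrs H a"
  then show "f v \<noteq> f a"
    using star_coloringsD(3)[of f H C a v a] by (auto simp: star_def nbrs_iff_edge_sym[OF sg])
qed (rule sg)

theorem three_coloring_extends_edge:
  assumes sg: "simple_graph H" and sc: "simply_connected H" and links: "connected_bipartite_links H"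
    and c3: "card C = 3" and y0: "y0 \<in> verts H" and z0: "z0 \<in> nbrs H y0"
    and colors: "\<alpha> \<in> C" "\<beta> \<in> C" "\<alpha> \<noteq> \<beta>"
  shows "\<exists>c. proper_coloring_on H (verts H) C c \<and> c y0 = \<alpha> \<and> c z0 = \<beta>"
proof -
  interpret local_colorings H "star_colorings H C"
    using local_colorings_three_colors[OF sg links c3] .
  obtain \<gamma> where \<gamma>: "\<gamma> \<in> C" "\<gamma> \<noteq> \<alpha>" "\<gamma> \<noteq> \<beta>" using card3_obtain_third[OF c3 colors(1,2)] .
  obtain f0 where f0: "f0 \<in> star_colorings H C y0" "f0 y0 = \<alpha>" "f0 z0 = \<beta>"
    using star_coloring_from_bipartite_sphere[OF sg _ z0 colors(1,2) \<gamma>(1) colors(3) \<gamma>(2,3)[symmetric]]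
      links y0 by (auto simp: connected_bipartite_links_def)
  obtain c where c: "\<forall>v w. (v, w) \<in> edges H \<longrightarrow> c v \<noteq> c w" "\<forall>v\<in>verts H. \<exists>f\<in>star_colorings H C v. c v = f v"
    "\<forall>v\<in>star H y0. c v = f0 v"
    using global_coloring[OF sc y0 f0(1)] by blast
  have "c v \<in> C" if "v \<in> verts H" for v
    using c(2) that star_coloringsD(2)[of _ H C v v] by (force simp: star_def)
  then have "proper_coloring_on H (verts H) C c" using c(1) by (simp add: proper_coloring_on_def)
  moreover have "c y0 = \<alpha>" "c z0 = \<beta>" using c(3) f0 z0 by (auto simp: star_def)
  ultimately show ?thesis by blast
qed

section \<open>Four-colouring\<close>

lemma star_coloring_sphere:
  assumes sg: "simple_graph G" and g: "g \<in> star_colorings G C b"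
  shows "proper_coloring_on (sphere G b) (verts (sphere G b)) (C - {g b}) g"
proof -
  have "g v \<noteq> g b" if "v \<in> nbrs G b" for v
    using star_coloringsD(3)[OF g, of v b] that by (simp add: star_def nbrs_iff_edge_sym[OF sg])
  then show ?thesis
    using star_coloringsD(2,3)[OF g] by (auto simp: proper_coloring_on_def edges_sphere star_def)
qed

lemma star_coloring_sphere_star:
  assumes sg: "simple_graph G" and f: "f \<in> star_colorings G C a" and b_a: "b \<in> nbrs G a"
  shows "proper_coloring_on (sphere G b) (star (sphere G b) a) (C - {f b}) f"
proof -
  have a_b: "a \<in> nbrs G b" using b_a nbrs_sym[OF sg] by blast
  then have sub: "star (sphere G b) a \<subseteq> star G a \<inter> nbrs G b"
    using nbrs_sphere[OF a_b] by (auto simp: star_def)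
  show ?thesis
    unfolding proper_coloring_on_def
  proof (intro conjI ballI impI)
    fix v assume "v \<in> star (sphere G b) a"
    then have v: "v \<in> star G a" "v \<in> nbrs G b" using sub by blast+
    then show "f v \<in> C - {f b}"
      using star_coloringsD(2)[OF f v(1)] star_coloringsD(3)[OF f v(1), of b] b_a
      by (auto simp: star_def nbrs_iff_edge_sym[OF sg])
  next
    fix v w assume "v \<in> star (sphere G b) a" "w \<in> star (sphere G b) a" "(v, w) \<in> edges (sphere G b)"
    then show "f v \<noteq> f w" using sub star_coloringsD(3)[OF f, of v w] by (auto simp: edges_sphere)
  qed
qed

lemma cone_star_coloring:
  assumes sg: "simple_graph G" and c: "proper_coloring_on (sphere G b) (nbrs G b) C c"
    and "\<kappa> \<notin> C" "\<kappa> \<in> D" "C \<subseteq> D"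
  shows "(\<lambda>v. if v = b then \<kappa> else if v \<in> nbrs G b then c v else 0) \<in> star_colorings G D b"
  using assms not_in_nbrs_self[OF sg, of b] simple_graph_no_loop[OF sg]
  by (auto simp: star_colorings_def proper_coloring_on_def star_def edges_sphere)

context
  fixes G :: "'a graph"
  assumes sg: "simple_graph G"
    and spheres: "\<And>b. b \<in> verts G \<Longrightarrow> simply_connected (sphere G b) \<and> connected_bipartite_links (sphere G b)"
begin

text \<open>A local colouring of the star of \<open>b\<close> is a cone over a 3-colouring of the sphere of \<open>b\<close>,
  and 3-colourings of the sphere are determined by an edge.\<close>

lemma four_star_colorings_rigid:
  assumes g: "g1 \<in> star_colorings G {..<4} b" "g2 \<in> star_colorings G {..<4} b"
    and b: "b \<in> verts G" and a: "a \<in> nbrs G b" and w: "w \<in> nbrs G a" "w \<in> nbrs G b"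
    and eq: "g1 b = g2 b" "g1 a = g2 a" "g1 w = g2 w"
  shows "g1 = g2"
proof -
  let ?H = "sphere G b"
  have "card ({..<4} - {g1 b}) = 3" using star_coloringsD(2)[OF g(1), of b] by (simp add: star_def)
  moreover have "connected_graph ?H" "\<forall>y\<in>verts ?H. connected_graph (sphere ?H y)"
    using spheres[OF b] by (auto simp: simply_connected_def connected_bipartite_links_def)
  moreover have "a \<in> verts ?H" "w \<in> nbrs ?H a" using nbrs_sphere[OF a] a w by simp_all
  moreover have "proper_coloring_on ?H (verts ?H) ({..<4} - {g1 b}) g2"
    using star_coloring_sphere[OF sg g(2)] eq(1) by simp
  ultimately have "\<forall>v\<in>verts ?H. g1 v = g2 v"
    using proper_coloring_rigid[OF simple_graph_sphere[OF sg]] star_coloring_sphere[OF sg g(1)] eq(2,3)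
    by blast
  then have "\<forall>v\<in>star G b. g1 v = g2 v" using eq(1) by (auto simp: star_def)
  then show ?thesis by (rule star_colorings_eqI[OF g])
qed

lemma four_star_coloring_continue:
  assumes ab: "(a, b) \<in> edges G" and f: "f \<in> star_colorings G {..<4} a"
  obtains w g where "w \<in> nbrs G a" "w \<in> nbrs G b" "g \<in> star_colorings G {..<4} b"
    "agree_on (star G a \<inter> star G b) g f"
proof -
  let ?H = "sphere G b" and ?C = "{..<4} - {f b}"
  have b: "b \<in> verts G" using simple_graph_edge_verts[OF sg ab] by simp
  have a_b: "a \<in> nbrs G b" and b_a: "b \<in> nbrs G a"
    using ab nbrs_iff_edge[OF sg] nbrs_iff_edge_sym[OF sg] by blast+
  have links: "connected_bipartite_links ?H" using spheres[OF b] by simp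
  then have "nbrs ?H a \<noteq> {}"
    using a_b by (auto simp: connected_bipartite_links_def connected_graph_def)
  then obtain w where wH: "w \<in> nbrs ?H a" by blast
  have w: "w \<in> nbrs G b" "w \<in> nbrs G a" using wH nbrs_sphere[OF a_b] by auto
  have fb: "f b \<in> {..<4}" using star_coloringsD(2)[OF f, of b] b_a by (simp add: star_def)
  then have c3: "card ?C = 3" by simp
  have f_H: "proper_coloring_on ?H (star ?H a) ?C f" using star_coloring_sphere_star[OF sg f b_a] .
  have "a \<in> star ?H a" "w \<in> star ?H a" "(a, w) \<in> edges ?H"
    using wH simple_graph_sphere[OF sg] by (auto simp: star_def nbrs_iff_edge)
  then have "f a \<in> ?C" "f w \<in> ?C" "f a \<noteq> f w" using proper_coloring_onD[OF f_H] by auto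
  then obtain c where c: "proper_coloring_on ?H (verts ?H) ?C c" "c a = f a" "c w = f w"
    using three_coloring_extends_edge[OF simple_graph_sphere[OF sg] _ links c3 _ wH] spheres[OF b] a_b by auto
  define g where "g v = (if v = b then f b else if v \<in> nbrs G b then c v else 0)" for v
  have g: "g \<in> star_colorings G {..<4} b"
    unfolding g_def using c(1) fb by (intro cone_star_coloring[OF sg]) auto
  have "star ?H a \<subseteq> verts ?H" using nbrs_sphere[OF a_b] a_b by (auto simp: star_def)
  then have "\<forall>v\<in>star ?H a. c v = f v"
    using proper_coloring_star_rigid[where g = c and g' = f, OF simple_graph_sphere[OF sg] _ c3 _ f_H wH c(2,3)]
      proper_coloring_on_subset[OF c(1)] links a_b by (simp add: connected_bipartite_links_def)
  then have "agree_on (star G a \<inter> star G b) g f"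
    using nbrs_sphere[OF a_b] by (auto simp: agree_on_def star_def g_def)
  then show ?thesis using that w g by blast
qed

lemma local_colorings_four_colors: "local_colorings G (star_colorings G {..<4})"
proof
  fix a b f assume ab: "(a, b) \<in> edges G" and f: "f \<in> star_colorings G {..<4} a"
  obtain w g where w: "w \<in> nbrs G a" "w \<in> nbrs G b" and g: "g \<in> star_colorings G {..<4} b"
    "agree_on (star G a \<inter> star G b) g f"
    using four_star_coloring_continue[OF ab f] .
  have b: "b \<in> verts G" and a_b: "a \<in> nbrs G b" and b_a: "b \<in> nbrs G a"
    using ab simple_graph_edge_verts[OF sg ab] nbrs_iff_edge[OF sg] nbrs_iff_edge_sym[OF sg] by blast+
  have common: "a \<in> star G a \<inter> star G b" "b \<in> star G a \<inter> star G b" "w \<in> star G a \<inter> star G b"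
    using a_b b_a w by (auto simp: star_def)
  have "g' = g" if "g' \<in> star_colorings G {..<4} b" "agree_on (star G a \<inter> star G b) g' f" for g'
    using four_star_colorings_rigid[OF that(1) g(1) b a_b w(1,2)] that(2) g(2) common
    by (simp add: agree_on_def)
  then show "\<exists>!g. g \<in> star_colorings G {..<4} b \<and> agree_on (star G a \<inter> star G b) g f"
    using g by blast
next
  fix a b c f g1 g2 g3
  assume abc: "(a, b) \<in> edges G" "(b, c) \<in> edges G" "(a, c) \<in> edges G"
    and f: "f \<in> star_colorings G {..<4} a"
    and g1: "g1 \<in> star_colorings G {..<4} b" "agree_on (star G a \<inter> star G b) g1 f"
    and g2: "g2 \<in> star_colorings G {..<4} c" "agree_on (star G b \<inter> star G c) g2 g1"
    and g3: "g3 \<in> star_colorings G {..<4} c" "agree_on (star G a \<inter> star G c) g3 f"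
  have triangle: "a \<in> nbrs G c" "b \<in> nbrs G a" "b \<in> nbrs G c" "c \<in> verts G"
    using abc simple_graph_edge_verts[OF sg] nbrs_iff_edge[OF sg] nbrs_iff_edge_sym[OF sg] by blast+
  have "\<forall>v\<in>{a, b, c}. v \<in> star G a \<inter> star G b \<inter> star G c"
    using abc nbrs_iff_edge[OF sg] nbrs_iff_edge_sym[OF sg] unfolding star_def by blast
  then have "g2 c = g3 c" "g2 a = g3 a" "g2 b = g3 b"
    using g1(2) g2(2) g3(2) by (auto simp: agree_on_def)
  then show "g2 = g3" using four_star_colorings_rigid[OF g2(1) g3(1) triangle(4,1,2,3)] by blast
next
  fix a f v assume "f \<in> star_colorings G {..<4} a" "v \<in> nbrs G a"
  then show "f v \<noteq> f a"
    using star_coloringsD(3)[of f G "{..<4}" a v a] by (auto simp: star_def nbrs_iff_edge_sym[OF sg])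
qed (rule sg)

theorem simply_connected_colorable_4:
  assumes sc: "simply_connected G"
  shows "colorable 4 G"
proof -
  interpret local_colorings G "star_colorings G {..<4}" by (rule local_colorings_four_colors)
  obtain x0 where x0: "x0 \<in> verts G" using sc by (auto simp: simply_connected_def connected_graph_def)
  let ?H = "sphere G x0"
  obtain y0 where y0: "y0 \<in> verts ?H"
    using spheres[OF x0] by (auto simp: simply_connected_def connected_graph_def)
  have "nbrs ?H y0 \<noteq> {}"
    using spheres[OF x0] y0 by (auto simp: connected_bipartite_links_def connected_graph_def)
  then obtain z0 where z0: "z0 \<in> nbrs ?H y0" by blast
  obtain c0 where c0: "proper_coloring_on ?H (verts ?H) {1, 2, 3} c0"
    using three_coloring_extends_edge[OF simple_graph_sphere[OF sg] _ _ _ y0 z0, of "{1, 2, 3}" 1 2]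
      spheres[OF x0] by auto
  have "(\<lambda>v. if v = x0 then 0 else if v \<in> nbrs G x0 then c0 v else 0) \<in> star_colorings G {..<4} x0"
    using c0 by (intro cone_star_coloring[OF sg]) auto
  then obtain c where c: "\<forall>v w. (v, w) \<in> edges G \<longrightarrow> c v \<noteq> c w"
    "\<forall>v\<in>verts G. \<exists>f\<in>star_colorings G {..<4} v. c v = f v"
    using global_coloring[OF sc x0] by blast
  have "c v < 4" if "v \<in> verts G" for v
    using c(2) that star_coloringsD(2)[of _ G "{..<4}" v v] by (force simp: star_def)
  then show ?thesis using c(1) by (auto simp: colorable_def)
qed

end

lemma edge_link_connected_bipartite:
  assumes xy: "(x, y) \<in> edges G"
    and link_class: "S_class 1 (edge_link G x y) \<or> B_class 1 (edge_link G x y)"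
    and even: "interior_edge G x y \<Longrightarrow> even (edge_degree G x y)"
  shows "connected_graph (edge_link G x y) \<and> bipartite (edge_link G x y)"
proof (cases "B_class 1 (edge_link G x y)")
  case False
  then have S1: "S_class 1 (edge_link G x y)" using link_class by blast
  then have "interior_edge G x y" using S_class_1_cycle_graph xy by (simp add: interior_edge_def)
  then show ?thesis using class_1_connected[OF link_class] S_class_1_even_bipartite[OF S1] even
    by (simp add: edge_degree_def)
qed (use class_1_connected[OF link_class] B_class_1_bipartite in blast)

lemma G_class_3_sphere:
  assumes G3: "in_G_step (S_class 2) (B_class 2) G" and b: "b \<in> verts G"
    and even: "\<forall>a b. interior_edge G a b \<longrightarrow> even (edge_degree G a b)"
  shows "simply_connected (sphere G b) \<and> connected_bipartite_links (sphere G b)"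
proof -
  have sg: "simple_graph G" using G3 by (simp add: in_G_step_def)
  have sphere: "S_class 2 (sphere G b) \<or> B_class 2 (sphere G b)" using G3 b by (simp add: in_G_step_def)
  then have "in_G_step (S_class 1) (B_class 1) (sphere G b)"
    using in_G_step_Suc[of 1] by (simp add: numeral_2_eq_2)
  then have "S_class 1 (edge_link G b y) \<or> B_class 1 (edge_link G b y)" if "y \<in> nbrs G b" for y
    using that sphere_sphere_eq_edge_link[OF that] by (force simp: in_G_step_def)
  then have "connected_graph (sphere (sphere G b) y) \<and> bipartite (sphere (sphere G b) y)"
    if "y \<in> nbrs G b" for y
    using edge_link_connected_bipartite[of b y G] even that sphere_sphere_eq_edge_link[OF that]
    by (simp add: nbrs_iff_edge[OF sg])
  then show ?thesis using class_2_simply_connected[OF sphere] by (simp add: connected_bipartite_links_def)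
qed

theorem mainTheorem11:
  fixes G :: "'a graph"
  assumes "G_class 3 G"
    and "simply_connected G"
    and "\<forall>a b. interior_edge G a b \<longrightarrow> even (edge_degree G a b)"
  shows "colorable 4 G"
proof -
  have G3: "in_G_step (S_class 2) (B_class 2) G" using assms(1) by (simp add: G_class_def)
  then have "simple_graph G" by (simp add: in_G_step_def)
  then show ?thesis
    using simply_connected_colorable_4 G_class_3_sphere[OF G3 _ assms(3)] assms(2) by blast
qed

end
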